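(* In the setting below, let $U_2(v)$ and $\widetilde U_2(v)$ be defined, for $v\in(0,1)$ and $c\in(0,1)$, by $$U_2(v)=e^{-\frac{m^2v^2}{2}(1-c)}\Biggl\{\frac{1}{mv}\sqrt{\frac{2\pi}{c}}+\sum_{k=1}^{s}\frac1{k!}\sum_{j=0}^{s-k}\gamma_{k,j}\Bigl(\frac c2\Bigr)^{-\frac{3k+j}{2}}\Gamma\Bigl(\frac{3k+j}{2}\Bigr)\Biggr\},$$ $$\widetilde U_2(v)=e^{-\frac{m^2v^2}{2}(1-c)}\Biggl\{1+\sum_{k=1}^{s}\frac1{k!}\sum_{j=0}^{s-k}\gamma_{k,j}\Bigl(\frac c2\Bigr)^{-\frac{3k+j}{2}}\Gamma\Bigl(\frac{3k+j}{2}\Bigr)\Biggr\}.$$ Then for every $v\in(0,1)$ and $c\in(0,1)$, $I_2(v)<U_2(v)$. Moreover, if $mv\ge\sqrt2$ or $mv>\sqrt{2\pi/c}$, then $I_2(v)<\widetilde U_2(v)$.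
   Context: Let $p_1\ge1$, $p_2\ge0$, $p=p_1+p_2\ge2$, integers $n\ge n_1>p$, $\tau_1=(n_1+1)/(n+1)$, $s\ge1$ an integer. With $\psi^{(s)}$ the polygamma function, define for $r\ge2$: $\kappa^{(r)}=(-1)^{r-1}[(p_1+\tau_1p_2)^{r}\psi^{(r-1)}(\tfrac12(np_1+n_1p_2))-\sum_{\ell=1}^{p_1}\psi^{(r-1)}(\tfrac12(n-p_1+\ell))-\tau_1^r\sum_{\ell=1}^{p_2}\psi^{(r-1)}(\tfrac12(n_1-p+\ell))]$, $\widetilde\kappa^{(r)}=\kappa^{(r)}/(\kappa^{(2)})^{r/2}$, $\gamma_{k,j}=\sum_{s_1+\dots+s_k=j,\ s_i\ge0}\prod_{i=1}^k\widetilde\kappa^{(s_i+3)}/(s_i+3)!$, $m=\frac{n_1-p-\frac12}{2}(\kappa^{(2)})^{1/2}$, and $I_2(v)=2\Bigl\{\int_{mv}^\infty t^{-1}e^{-t^2/2}dt+\sum_{k=1}^s\frac1{k!}\sum_{j=0}^{s-k}\gamma_{k,j}\int_{mv}^\infty t^{3k+j-1}e^{-t^2/2}dt\Bigr\}$. *)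

theory Defs
  imports "HOL-Analysis.Analysis"
begin

definition tau1 :: "nat \<Rightarrow> nat \<Rightarrow> real" where
  "tau1 n n1 = (real n1 + 1) / (real n + 1)"

definition kappa :: "nat \<Rightarrow> nat \<Rightarrow> nat \<Rightarrow> nat \<Rightarrow> nat \<Rightarrow> real" where
  "kappa p1 p2 n n1 r = (-1) ^ (r - 1) *
     ((real p1 + tau1 n n1 * real p2) ^ r
        * Polygamma (r - 1) ((real n * real p1 + real n1 * real p2) / 2)
      - (\<Sum>l=1..p1. Polygamma (r - 1) ((real n - real p1 + real l) / 2))
      - tau1 n n1 ^ r
        * (\<Sum>l=1..p2. Polygamma (r - 1) ((real n1 - real (p1 + p2) + real l) / 2)))"

definition kappa_tilde :: "nat \<Rightarrow> nat \<Rightarrow> nat \<Rightarrow> nat \<Rightarrow> nat \<Rightarrow> real" where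
  "kappa_tilde p1 p2 n n1 r = kappa p1 p2 n n1 r / (kappa p1 p2 n n1 2 powr (real r / 2))"

text \<open>gamma_{k,j}: sum over (s_1,...,s_k) (indexed 0..k-1) of nonnegative integers summing to j\<close>
definition gamma_kj :: "nat \<Rightarrow> nat \<Rightarrow> nat \<Rightarrow> nat \<Rightarrow> nat \<Rightarrow> nat \<Rightarrow> real" where
  "gamma_kj p1 p2 n n1 k j =
     (\<Sum>\<sigma> \<in> {\<sigma> :: nat \<Rightarrow> nat. (\<forall>i. k \<le> i \<longrightarrow> \<sigma> i = 0) \<and> (\<Sum>i<k. \<sigma> i) = j}.
        \<Prod>i<k. kappa_tilde p1 p2 n n1 (\<sigma> i + 3) / fact (\<sigma> i + 3))"

definition m_param :: "nat \<Rightarrow> nat \<Rightarrow> nat \<Rightarrow> nat \<Rightarrow> real" where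
  "m_param p1 p2 n n1 = (real n1 - real (p1 + p2) - 1/2) / 2 * sqrt (kappa p1 p2 n n1 2)"

definition I2 :: "nat \<Rightarrow> nat \<Rightarrow> nat \<Rightarrow> nat \<Rightarrow> nat \<Rightarrow> real \<Rightarrow> real" where
  "I2 p1 p2 n n1 s v = (let a = m_param p1 p2 n n1 * v in
     2 * ((LBINT t:{a..}. inverse t * exp (- (t^2) / 2))
        + (\<Sum>k=1..s. 1 / fact k * (\<Sum>j=0..s-k. gamma_kj p1 p2 n n1 k j *
              (LBINT t:{a..}. t ^ (3*k + j - 1) * exp (- (t^2) / 2))))))"

definition U2_sum :: "nat \<Rightarrow> nat \<Rightarrow> nat \<Rightarrow> nat \<Rightarrow> nat \<Rightarrow> real \<Rightarrow> real" where
  "U2_sum p1 p2 n n1 s c = (\<Sum>k=1..s. 1 / fact k * (\<Sum>j=0..s-k. gamma_kj p1 p2 n n1 k j *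
       (c/2) powr (- real (3*k + j) / 2) * Gamma (real (3*k + j) / 2)))"

definition U2 :: "nat \<Rightarrow> nat \<Rightarrow> nat \<Rightarrow> nat \<Rightarrow> nat \<Rightarrow> real \<Rightarrow> real \<Rightarrow> real" where
  "U2 p1 p2 n n1 s v c = (let a = m_param p1 p2 n n1 * v in
     exp (- (a^2) / 2 * (1 - c)) * (1 / a * sqrt (2 * pi / c) + U2_sum p1 p2 n n1 s c))"

definition U2_tilde :: "nat \<Rightarrow> nat \<Rightarrow> nat \<Rightarrow> nat \<Rightarrow> nat \<Rightarrow> real \<Rightarrow> real \<Rightarrow> real" where
  "U2_tilde p1 p2 n n1 s v c = (let a = m_param p1 p2 n n1 * v in
     exp (- (a^2) / 2 * (1 - c)) * (1 + U2_sum p1 p2 n n1 s c))"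

end

(*
  All cumulants kappa^(r), r >= 2, are positive, so m > 0 and every gamma_{k,j} is nonnegative.
  Writing psi^(r-1) through the Hurwitz zeta function zeta(r, w) = sum_k (w + k)^-r, kappa^(r) is
  (r-1)! (sum_l zeta(r, x_l) + tau^r sum_l zeta(r, y_l) - A^r zeta(r, X)) with A = p1 + tau p2.
  The telescoping bounds w^(1-r) < (r-1) zeta(r, w) <= (w - 1/2)^(1-r), the identity
  sum_l x_l + sum_l y_l = X - p(p-1)/4 <= X - 1/2 and a weighted power-mean inequality show that
  this is positive.

  On [mv, oo) one has exp(-t^2/2) <= exp(-(mv)^2 (1-c)/2) exp(-c t^2/2), and the moments of
  exp(-c t^2/2) over (0, oo) are (c/2)^(-q/2) Gamma(q/2)/2; this bounds every term of I_2 with a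
  nonnegative coefficient. For the logarithmic term use 1/t <= 1/(mv) and the fact that a Gaussian
  tail is less than half the full integral sqrt(2 pi/c), or, when mv >= sqrt 2, 1/t <= t/(mv)^2
  together with the integral of t exp(-t^2/2) from mv to oo being exp(-(mv)^2/2).
*)
theory Submission
  imports Defs "HOL-Real_Asymp.Real_Asymp"
begin

section \<open>The Hurwitz zeta function at integer arguments\<close>

text \<open>Only meaningful for \<open>r \<ge> 2\<close>; otherwise the series diverges and the value is junk.\<close>
definition hurwitz_zeta :: "nat \<Rightarrow> real \<Rightarrow> real" where
  "hurwitz_zeta r w = (\<Sum>k. inverse ((w + real k) ^ r))"

lemma hurwitz_zeta_sums:
  assumes "w > 0" "r \<ge> 2"
  shows "(\<lambda>k. inverse ((w + real k) ^ r)) sums hurwitz_zeta r w"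
  using Polygamma_converges'[of w r] assms unfolding hurwitz_zeta_def by (simp add: summable_sums)

lemma Polygamma_eq_hurwitz_zeta:
  assumes "w > 0" "q > 0"
  shows "Polygamma q w = (-1) ^ Suc q * fact q * hurwitz_zeta (Suc q) w"
proof -
  have "hurwitz_zeta (Suc q) w = (-1) ^ Suc q * Polygamma q w / fact q"
    using Polygamma_LIMSEQ[of w q] hurwitz_zeta_sums[of w "Suc q"] assms sums_unique2 by auto
  moreover have "(-1::real) ^ Suc q * (-1) ^ Suc q = 1"
    by (simp add: power_mult_distrib[symmetric])
  ultimately show ?thesis by simp
qed

lemma DERIV_inverse_power:
  fixes x :: real
  assumes "x \<noteq> 0"
  shows "((\<lambda>t. inverse (t ^ q)) has_real_derivative - (real q * inverse (x ^ Suc q))) (at x)"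
proof -
  have "inverse (x ^ q) * (real q * x ^ (q - 1)) * inverse (x ^ q) = real q * inverse (x ^ Suc q)"
    using assms by (cases q) (simp_all add: field_simps)
  then show ?thesis
    using assms by (auto intro!: derivative_eq_intros)
qed

lemma inverse_power_diff_less:
  fixes x :: real
  assumes "x > 0" "q \<ge> 1"
  shows "inverse (x ^ q) - inverse ((x + 1) ^ q) < real q * inverse (x ^ Suc q)"
proof -
  obtain z where z: "x < z" "z < x + 1"
    and "inverse ((x + 1) ^ q) - inverse (x ^ q) = (x + 1 - x) * - (real q * inverse (z ^ Suc q))"
    using MVT2[of x "x + 1" "\<lambda>t. inverse (t ^ q)" "\<lambda>z. - (real q * inverse (z ^ Suc q))"]
      DERIV_inverse_power assms by auto
  then have mvt: "inverse (x ^ q) - inverse ((x + 1) ^ q) = real q * inverse (z ^ Suc q)"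
    by (simp only: add_diff_cancel_left' mult_1)
  have "inverse (z ^ Suc q) < inverse (x ^ Suc q)"
    using assms z by (intro less_imp_inverse_less power_strict_mono) auto
  then show ?thesis
    unfolding mvt using assms by (intro mult_strict_left_mono) auto
qed

lemma inverse_power_midpoint_le:
  fixes x s :: real
  assumes "0 \<le> s" "s < x"
  shows "2 * inverse (x ^ m) \<le> inverse ((x - s) ^ m) + inverse ((x + s) ^ m)"
proof -
  have "(x - s) * (x + s) \<le> x ^ 2"
    by (simp add: algebra_simps power2_eq_square)
  then have "((x - s) * (x + s)) ^ m \<le> (x ^ 2) ^ m"
    using assms by (intro power_mono) auto
  moreover have "0 < (x - s) * (x + s)"
    using assms by simp
  ultimately have "inverse ((x ^ 2) ^ m) \<le> inverse (((x - s) * (x + s)) ^ m)"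
    by (intro le_imp_inverse_le) auto
  moreover have "inverse (x ^ m) ^ 2 = inverse ((x ^ 2) ^ m)"
    by (metis power_inverse power_mult mult.commute)
  moreover have "inverse ((x - s) ^ m) * inverse ((x + s) ^ m) = inverse (((x - s) * (x + s)) ^ m)"
    by (simp add: power_mult_distrib)
  ultimately have "inverse (x ^ m) ^ 2 \<le> inverse ((x - s) ^ m) * inverse ((x + s) ^ m)"
    by simp
  then have "inverse (x ^ m) \<le> sqrt (inverse ((x - s) ^ m) * inverse ((x + s) ^ m))"
    using assms by (simp add: real_le_rsqrt)
  also have "\<dots> \<le> (inverse ((x - s) ^ m) + inverse ((x + s) ^ m)) / 2"
    using assms by (intro arith_geo_mean_sqrt) auto
  finally show ?thesis by simp
qed

text \<open>Hermite--Hadamard: \<open>t \<mapsto> q / t ^ (q + 1)\<close> is convex, so its integral over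
  \<open>[x - 1/2, x + 1/2]\<close> dominates its value at the midpoint.\<close>
lemma inverse_power_diff_ge:
  fixes x :: real
  assumes "x > 1/2"
  shows "real q * inverse (x ^ Suc q) \<le> inverse ((x - 1/2) ^ q) - inverse ((x + 1/2) ^ q)"
proof -
  define h where "h s = inverse ((x - s) ^ q) - inverse ((x + s) ^ q) - 2 * s * real q * inverse (x ^ Suc q)"
    for s
  define h' where "h' s = real q * (inverse ((x - s) ^ Suc q) + inverse ((x + s) ^ Suc q)
    - 2 * inverse (x ^ Suc q))" for s
  have "h 0 \<le> h (1/2)"
  proof (rule deriv_nonneg_imp_mono[of 0 "1/2" h h'])
    fix s :: real
    assume s: "s \<in> {0..1/2}"
    then have "x - s \<noteq> 0" "x + s \<noteq> 0"
      using assms by auto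
    have "((\<lambda>s. inverse ((x - s) ^ q)) has_real_derivative
        - (real q * inverse ((x - s) ^ Suc q)) * (- 1)) (at s)"
      by (rule DERIV_chain2[where f = "\<lambda>t. inverse (t ^ q)" and g = "\<lambda>s. x - s"])
        (rule DERIV_inverse_power[OF \<open>x - s \<noteq> 0\<close>], auto intro!: derivative_eq_intros)
    moreover have "((\<lambda>s. inverse ((x + s) ^ q)) has_real_derivative
        - (real q * inverse ((x + s) ^ Suc q)) * 1) (at s)"
      by (rule DERIV_chain2[where f = "\<lambda>t. inverse (t ^ q)" and g = "\<lambda>s. x + s"])
        (rule DERIV_inverse_power[OF \<open>x + s \<noteq> 0\<close>], auto intro!: derivative_eq_intros)
    moreover have "((\<lambda>s. 2 * s * real q * inverse (x ^ Suc q)) has_real_derivative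
        2 * real q * inverse (x ^ Suc q)) (at s)"
      by (auto intro!: derivative_eq_intros)
    ultimately show "(h has_real_derivative h' s) (at s)"
      unfolding h_def h'_def by (rule DERIV_cong[OF DERIV_diff[OF DERIV_diff]]) (simp add: algebra_simps)
    show "h' s \<ge> 0"
      using inverse_power_midpoint_le[of s x "Suc q"] s assms unfolding h'_def by auto
  qed simp
  then show ?thesis
    by (simp add: h_def)
qed

lemma inverse_power_shift_LIMSEQ:
  assumes "q \<ge> 1"
  shows "(\<lambda>k. inverse ((w + real k) ^ q)) \<longlonglongrightarrow> 0"
proof -
  have "filterlim (\<lambda>k. w + real k) at_top sequentially"
    by (intro filterlim_tendsto_add_at_top[OF tendsto_const] filterlim_real_sequentially)
  then have "filterlim (\<lambda>k. (w + real k) ^ q) at_top sequentially"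
    using assms by (intro filterlim_pow_at_top) auto
  then show ?thesis
    by (rule tendsto_inverse_0_at_top)
qed

lemma hurwitz_zeta_lower:
  assumes "w > 0" "q \<ge> 1"
  shows "inverse (w ^ q) < real q * hurwitz_zeta (Suc q) w"
proof -
  let ?f = "\<lambda>k::nat. inverse ((w + real k) ^ q)"
  let ?g = "\<lambda>k::nat. real q * inverse ((w + real k) ^ Suc q)"
  have "(\<lambda>k. ?f k - ?f (Suc k)) sums (?f 0 - 0)"
    by (rule telescope_sums'[OF inverse_power_shift_LIMSEQ[OF assms(2)]])
  then have telescope: "(\<lambda>k. ?f k - ?f (Suc k)) sums ?f 0"
    by simp
  have "?g sums (real q * hurwitz_zeta (Suc q) w)"
    using assms by (intro sums_mult hurwitz_zeta_sums) auto
  with telescope have diff: "(\<lambda>k. ?g k - (?f k - ?f (Suc k))) sums (real q * hurwitz_zeta (Suc q) w - ?f 0)"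
    by (intro sums_diff)
  have "0 < (\<Sum>k. ?g k - (?f k - ?f (Suc k)))"
  proof (rule suminf_pos)
    show "summable (\<lambda>k. ?g k - (?f k - ?f (Suc k)))"
      using diff by (rule sums_summable)
    fix k
    have "?f (Suc k) = inverse ((w + real k + 1) ^ q)"
      by (simp add: algebra_simps)
    moreover have "0 < w + real k"
      using assms by simp
    ultimately show "0 < ?g k - (?f k - ?f (Suc k))"
      using inverse_power_diff_less[of "w + real k" q] assms by linarith
  qed
  then show ?thesis
    using sums_unique[OF diff] by simp
qed

lemma hurwitz_zeta_upper:
  assumes "w > 1/2" "q \<ge> 1"
  shows "real q * hurwitz_zeta (Suc q) w \<le> inverse ((w - 1/2) ^ q)"
proof -
  let ?f = "\<lambda>k::nat. inverse ((w - 1/2 + real k) ^ q)"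
  have "(\<lambda>k. ?f k - ?f (Suc k)) sums (?f 0 - 0)"
    by (rule telescope_sums'[OF inverse_power_shift_LIMSEQ[OF assms(2)]])
  then have telescope: "(\<lambda>k. ?f k - ?f (Suc k)) sums ?f 0"
    by simp
  have "(\<lambda>k. real q * inverse ((w + real k) ^ Suc q)) sums (real q * hurwitz_zeta (Suc q) w)"
    using assms by (intro sums_mult hurwitz_zeta_sums) auto
  then have "real q * hurwitz_zeta (Suc q) w \<le> ?f 0"
  proof (rule sums_le[OF _ _ telescope, rotated])
    fix k
    show "real q * inverse ((w + real k) ^ Suc q) \<le> ?f k - ?f (Suc k)"
      using inverse_power_diff_ge[of "w + real k" q] assms by (simp add: algebra_simps)
  qed
  then show ?thesis
    by simp
qed

lemma power_ge_tangent:
  fixes b m :: real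
  assumes "b \<ge> 0" "m > 0"
  shows "m ^ q + real q * m ^ (q - 1) * (b - m) \<le> b ^ q"
proof -
  have "1 + real q * (b / m - 1) \<le> (b / m) ^ q"
    using Bernoulli_inequality[of "b / m - 1" q] assms by simp
  then have "m ^ q * (1 + real q * (b / m - 1)) \<le> m ^ q * (b / m) ^ q"
    using assms by (intro mult_left_mono) auto
  moreover have "m ^ q * (1 + real q * (b / m - 1)) = m ^ q + real q * m ^ (q - 1) * (b - m)"
    using assms by (cases q) (simp_all add: field_simps)
  ultimately show ?thesis
    using assms by (simp add: power_divide)
qed

section \<open>Positivity of the cumulants\<close>

lemma sum_power2_div_ge:
  fixes w z :: "'a \<Rightarrow> real"
  assumes "finite K" "\<And>k. k \<in> K \<Longrightarrow> z k > 0" "sum z K \<le> T" "T > 0"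
  shows "sum w K ^ 2 / T \<le> (\<Sum>k\<in>K. w k ^ 2 / z k)"
proof -
  define m where "m = sum w K / T"
  have "2 * m * w k - m ^ 2 * z k \<le> w k ^ 2 / z k" if "k \<in> K" for k
  proof -
    have "0 \<le> (w k - m * z k) ^ 2 / z k"
      using assms(2)[OF that] by simp
    also have "\<dots> = w k ^ 2 / z k - (2 * m * w k - m ^ 2 * z k)"
      using assms(2)[OF that] by (simp add: field_simps power2_eq_square)
    finally show ?thesis by simp
  qed
  then have "(\<Sum>k\<in>K. 2 * m * w k - m ^ 2 * z k) \<le> (\<Sum>k\<in>K. w k ^ 2 / z k)"
    by (rule sum_mono)
  moreover have "(\<Sum>k\<in>K. 2 * m * w k - m ^ 2 * z k) = 2 * m * sum w K - m ^ 2 * sum z K"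
    by (simp add: sum_subtractf sum_distrib_left)
  moreover have "m ^ 2 * sum z K \<le> m ^ 2 * T"
    using assms(3) by (intro mult_left_mono) auto
  moreover have "2 * m * sum w K - m ^ 2 * T = sum w K ^ 2 / T"
    using assms(4) by (simp add: m_def field_simps power2_eq_square)
  ultimately show ?thesis
    by linarith
qed

text \<open>Tangent line of \<open>u \<mapsto> u ^ q\<close> at \<open>m = W / T\<close>, evaluated at \<open>u = w k / z k\<close>.\<close>
lemma weighted_inverse_power_sum_ge:
  fixes w z :: "'a \<Rightarrow> real"
  assumes "finite K" "K \<noteq> {}"
    and pos: "\<And>k. k \<in> K \<Longrightarrow> w k > 0" "\<And>k. k \<in> K \<Longrightarrow> z k > 0"
    and T: "sum z K \<le> T"
  shows "sum w K ^ Suc q * inverse (T ^ q) \<le> (\<Sum>k\<in>K. w k ^ Suc q * inverse (z k ^ q))"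
proof -
  define W where "W = sum w K"
  have "W > 0" "sum z K > 0"
    using assms by (simp_all add: W_def sum_pos)
  then have "T > 0"
    using T by linarith
  define m where "m = W / T"
  have "m > 0"
    using \<open>W > 0\<close> \<open>T > 0\<close> by (simp add: m_def)
  define d where "d = real q * m ^ (q - 1)"
  have CS: "m * W \<le> (\<Sum>k\<in>K. w k ^ 2 / z k)"
    using sum_power2_div_ge[OF \<open>finite K\<close> pos(2) T \<open>T > 0\<close>, of w]
    by (simp add: m_def W_def power2_eq_square)
  have "sum w K ^ Suc q * inverse (T ^ q) = W * m ^ q"
    by (simp add: W_def m_def field_simps)
  also have "\<dots> \<le> W * m ^ q + d * ((\<Sum>k\<in>K. w k ^ 2 / z k) - m * W)"
    using CS \<open>m > 0\<close> by (simp add: d_def)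
  also have "\<dots> = (\<Sum>k\<in>K. w k * (m ^ q + d * (w k / z k - m)))"
    by (simp add: W_def sum.distrib sum_distrib_left sum_distrib_right sum_subtractf
        power2_eq_square algebra_simps)
  also have "\<dots> \<le> (\<Sum>k\<in>K. w k * (w k / z k) ^ q)"
    using pos power_ge_tangent[of _ m q] \<open>m > 0\<close>
    by (intro sum_mono mult_left_mono) (auto simp: d_def less_imp_le)
  also have "\<dots> = (\<Sum>k\<in>K. w k ^ Suc q * inverse (z k ^ q))"
    by (simp only: divide_inverse power_mult_distrib power_inverse power_Suc mult.assoc)
  finally show ?thesis .
qed

lemma hurwitz_zeta_weighted_less:
  fixes w z :: "'a \<Rightarrow> real"
  assumes "finite K" "K \<noteq> {}" "q \<ge> 1"
    and pos: "\<And>k. k \<in> K \<Longrightarrow> w k > 0" "\<And>k. k \<in> K \<Longrightarrow> z k > 0"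
    and X: "sum z K \<le> X - 1/2"
  shows "sum w K ^ Suc q * hurwitz_zeta (Suc q) X
    < (\<Sum>k\<in>K. w k ^ Suc q * hurwitz_zeta (Suc q) (z k))"
proof -
  have "sum z K > 0"
    using assms by (intro sum_pos) auto
  then have "X > 1/2"
    using X by linarith
  have W: "sum w K ^ Suc q \<ge> 0"
    using pos by (simp add: sum_nonneg less_imp_le)
  have "real q * (sum w K ^ Suc q * hurwitz_zeta (Suc q) X)
      \<le> sum w K ^ Suc q * inverse ((X - 1/2) ^ q)"
    using mult_left_mono[OF hurwitz_zeta_upper[OF \<open>X > 1/2\<close> \<open>q \<ge> 1\<close>] W] by (simp add: mult_ac)
  also have "\<dots> \<le> (\<Sum>k\<in>K. w k ^ Suc q * inverse (z k ^ q))"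
    by (rule weighted_inverse_power_sum_ge) (use assms in auto)
  also have "\<dots> < (\<Sum>k\<in>K. w k ^ Suc q * (real q * hurwitz_zeta (Suc q) (z k)))"
    using assms hurwitz_zeta_lower by (intro sum_strict_mono mult_strict_left_mono) auto
  also have "\<dots> = real q * (\<Sum>k\<in>K. w k ^ Suc q * hurwitz_zeta (Suc q) (z k))"
    by (simp add: sum_distrib_left mult_ac)
  finally show ?thesis
    using \<open>q \<ge> 1\<close> by simp
qed

lemma kappa_eq_hurwitz_zeta:
  assumes "n \<ge> n1" "n1 > p1 + p2" "p1 + p2 > 0" "q > 0"
  shows "kappa p1 p2 n n1 (Suc q) = fact q *
    ((\<Sum>l=1..p1. hurwitz_zeta (Suc q) ((real n - real p1 + real l) / 2))
     + tau1 n n1 ^ Suc q * (\<Sum>l=1..p2. hurwitz_zeta (Suc q) ((real n1 - real (p1 + p2) + real l) / 2))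
     - (real p1 + tau1 n n1 * real p2) ^ Suc q
       * hurwitz_zeta (Suc q) ((real n * real p1 + real n1 * real p2) / 2))"
proof -
  define \<sigma> :: real where "\<sigma> = (-1) ^ Suc q * fact q"
  have \<psi>: "Polygamma q w = \<sigma> * hurwitz_zeta (Suc q) w" if "w > 0" for w
    using Polygamma_eq_hurwitz_zeta[OF that \<open>q > 0\<close>] by (simp add: \<sigma>_def)
  have "real n1 * real (p1 + p2) \<le> real n * real p1 + real n1 * real p2"
    using assms by (simp add: algebra_simps mult_right_mono)
  moreover have "real n1 * real (p1 + p2) > 0"
    using assms by (intro mult_pos_pos) auto
  ultimately have X: "Polygamma q ((real n * real p1 + real n1 * real p2) / 2)
      = \<sigma> * hurwitz_zeta (Suc q) ((real n * real p1 + real n1 * real p2) / 2)"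
    by (intro \<psi>) simp
  have x: "(\<Sum>l=1..p1. Polygamma q ((real n - real p1 + real l) / 2))
      = \<sigma> * (\<Sum>l=1..p1. hurwitz_zeta (Suc q) ((real n - real p1 + real l) / 2))"
    unfolding sum_distrib_left using assms by (intro sum.cong refl \<psi>) auto
  have y: "(\<Sum>l=1..p2. Polygamma q ((real n1 - real (p1 + p2) + real l) / 2))
      = \<sigma> * (\<Sum>l=1..p2. hurwitz_zeta (Suc q) ((real n1 - real (p1 + p2) + real l) / 2))"
    unfolding sum_distrib_left using assms by (intro sum.cong refl \<psi>) auto
  let ?A = "real p1 + tau1 n n1 * real p2"
  let ?\<zeta>X = "hurwitz_zeta (Suc q) ((real n * real p1 + real n1 * real p2) / 2)"
  let ?\<zeta>x = "\<Sum>l=1..p1. hurwitz_zeta (Suc q) ((real n - real p1 + real l) / 2)"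
  let ?\<zeta>y = "\<Sum>l=1..p2. hurwitz_zeta (Suc q) ((real n1 - real (p1 + p2) + real l) / 2)"
  have "kappa p1 p2 n n1 (Suc q) = ((-1) ^ q * \<sigma>) * (?A ^ Suc q * ?\<zeta>X - ?\<zeta>x - tau1 n n1 ^ Suc q * ?\<zeta>y)"
    unfolding kappa_def diff_Suc_1 X x y by algebra
  also have "(-1) ^ q * \<sigma> = - fact q"
    by (simp add: \<sigma>_def power_mult_distrib[symmetric])
  finally show ?thesis
    by (simp add: algebra_simps)
qed

lemma polygamma_arguments_sum_le:
  assumes "p1 + p2 \<ge> 2"
  shows "(\<Sum>l=1..p1. (real n - real p1 + real l) / 2) + (\<Sum>l=1..p2. (real n1 - real (p1 + p2) + real l) / 2)
    \<le> (real n * real p1 + real n1 * real p2) / 2 - 1/2"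
proof -
  have "2 * (\<Sum>l=1..p1. (real n - real p1 + real l) / 2) = real p1 * (real n - real p1) + (\<Sum>l=1..p1. real l)"
    by (simp add: sum.distrib flip: sum_divide_distrib)
  moreover have "2 * (\<Sum>l=1..p2. (real n1 - real (p1 + p2) + real l) / 2)
      = real p2 * (real n1 - real (p1 + p2)) + (\<Sum>l=1..p2. real l)"
    by (simp add: sum.distrib flip: sum_divide_distrib)
  moreover have "(real p1 + real p2) * (real p1 + real p2 - 1) \<ge> 2 * 1"
    using assms by (intro mult_mono) linarith+
  ultimately show ?thesis
    using double_gauss_sum_from_Suc_0[of p1, where 'a = real] double_gauss_sum_from_Suc_0[of p2, where 'a = real]
    by (simp add: field_simps)
qed

lemma kappa_pos:
  assumes "p1 + p2 \<ge> 2" "n \<ge> n1" "n1 > p1 + p2" "r \<ge> 2"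
  shows "kappa p1 p2 n n1 r > 0"
proof -
  obtain q where r: "r = Suc q" and "q \<ge> 1"
    using assms by (cases r) auto
  define \<tau> where "\<tau> = tau1 n n1"
  define x where "x l = (real n - real p1 + real l) / 2" for l :: nat
  define y where "y l = (real n1 - real (p1 + p2) + real l) / 2" for l :: nat
  define X where "X = (real n * real p1 + real n1 * real p2) / 2"
  define K where "K = {1..p1} <+> {1..p2}"
  define w :: "nat + nat \<Rightarrow> real" where "w = case_sum (\<lambda>_. 1) (\<lambda>_. \<tau>)"
  define z :: "nat + nat \<Rightarrow> real" where "z = case_sum x y"
  have "\<tau> > 0"
    by (simp add: \<tau>_def tau1_def)
  have "finite K" "K \<noteq> {}"
    using assms by (auto simp: K_def)
  have wz_pos: "w k > 0" "z k > 0" if "k \<in> K" for k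
    using that assms \<open>\<tau> > 0\<close> by (auto simp: K_def w_def z_def x_def y_def)
  have "sum z K = sum x {1..p1} + sum y {1..p2}"
    by (simp add: K_def z_def sum.Plus comp_def)
  then have "sum z K \<le> X - 1/2"
    using polygamma_arguments_sum_le[OF assms(1)] by (simp add: x_def y_def X_def)
  then have "sum w K ^ Suc q * hurwitz_zeta (Suc q) X
      < (\<Sum>k\<in>K. w k ^ Suc q * hurwitz_zeta (Suc q) (z k))"
    using hurwitz_zeta_weighted_less \<open>finite K\<close> \<open>K \<noteq> {}\<close> \<open>q \<ge> 1\<close> wz_pos by blast
  moreover have "sum w K = real p1 + \<tau> * real p2"
    by (simp add: K_def w_def sum.Plus comp_def)
  moreover have "(\<Sum>k\<in>K. w k ^ Suc q * hurwitz_zeta (Suc q) (z k))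
      = (\<Sum>l=1..p1. hurwitz_zeta (Suc q) (x l)) + \<tau> ^ Suc q * (\<Sum>l=1..p2. hurwitz_zeta (Suc q) (y l))"
    by (simp add: K_def w_def z_def sum.Plus sum_distrib_left comp_def)
  moreover have "kappa p1 p2 n n1 r = fact q * ((\<Sum>l=1..p1. hurwitz_zeta (Suc q) (x l))
      + \<tau> ^ Suc q * (\<Sum>l=1..p2. hurwitz_zeta (Suc q) (y l))
      - (real p1 + \<tau> * real p2) ^ Suc q * hurwitz_zeta (Suc q) X)"
    unfolding r \<tau>_def x_def y_def X_def
    by (rule kappa_eq_hurwitz_zeta) (use assms \<open>q \<ge> 1\<close> in auto)
  ultimately show ?thesis
    by simp
qed

section \<open>Gaussian tail integrals\<close>

lemma Gamma_real_set_integral: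
  fixes x :: real
  assumes "x > 0"
  shows "set_integrable lborel {0<..} (\<lambda>t. t powr (x - 1) / exp t)"
    and "(LBINT t:{0<..}. t powr (x - 1) / exp t) = Gamma x"
proof -
  have "((\<lambda>t. t powr (x - 1) / exp t) has_integral Gamma x) {0..}"
    by (rule Gamma_integral_real[OF assms])
  then have "((\<lambda>t. if t \<in> {0<..} then t powr (x - 1) / exp t else 0) has_integral Gamma x) {0..}"
    by (rule has_integral_spike[of "{0}", rotated 2]) auto
  then have I: "((\<lambda>t. t powr (x - 1) / exp t) has_integral Gamma x) {0<..}"
    by (subst (asm) has_integral_restrict) auto
  have "(\<lambda>t. t powr (x - 1) / exp t) absolutely_integrable_on {0<..}"
    by (rule nonnegative_absolutely_integrable_1) (use I in \<open>auto simp: has_integral_integrable\<close>)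
  moreover have "(\<lambda>t. indicator {0<..} t *\<^sub>R (t powr (x - 1) / exp t)) \<in> borel_measurable lborel"
    by measurable
  ultimately show integrable: "set_integrable lborel {0<..} (\<lambda>t. t powr (x - 1) / exp t)"
    unfolding set_integrable_def by (subst (asm) integrable_completion) auto
  show "(LBINT t:{0<..}. t powr (x - 1) / exp t) = Gamma x"
    using set_borel_integral_eq_integral(2)[OF integrable] I by (simp add: integral_unique)
qed

lemma gaussian_substitution_integrand:
  fixes c s :: real
  assumes "c > 0" "s > 0" "q \<ge> 1"
  shows "sqrt (2 * s / c) ^ (q - 1) * exp (- (c * sqrt (2 * s / c) ^ 2) / 2) * (1 / (c * sqrt (2 * s / c)))
    = (c / 2) powr (- real q / 2) / 2 * (s powr (real q / 2 - 1) / exp s)"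
proof -
  define y where "y = 2 * s / c"
  have "y > 0"
    using assms by (simp add: y_def)
  then have sqrt_y: "sqrt y = y powr (1/2)"
    by (simp add: powr_half_sqrt)
  have "sqrt y ^ (q - 1) * (1 / sqrt y) = y powr (real (q - 1) / 2 - 1/2)"
    using \<open>y > 0\<close> by (simp add: sqrt_y powr_diff powr_powr flip: powr_realpow)
  also have "real (q - 1) / 2 - 1/2 = real q / 2 - 1"
    using assms by (simp add: field_simps)
  also have "y powr (real q / 2 - 1) = (2 / c) powr (real q / 2 - 1) * s powr (real q / 2 - 1)"
  proof -
    have "y = 2 / c * s"
      by (simp add: y_def)
    then show ?thesis
      using assms by (simp only:) (rule powr_mult; simp)
  qed
  finally have power: "sqrt y ^ (q - 1) * (1 / sqrt y) = (2 / c) powr (real q / 2 - 1) * s powr (real q / 2 - 1)" .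
  have "(2 / c) powr (real q / 2 - 1) = (2 / c) powr (real q / 2) * (c / 2)"
    using assms by (simp add: powr_diff)
  moreover have "(2 / c) powr (real q / 2) = (c / 2) powr (- real q / 2)"
    using assms by (simp add: powr_minus_divide powr_divide)
  ultimately have scale: "(2 / c) powr (real q / 2 - 1) / c = (c / 2) powr (- real q / 2) / 2"
    using assms by simp
  have "c * sqrt y ^ 2 = 2 * s"
    using \<open>y > 0\<close> assms by (simp add: y_def)
  then have "exp (- (c * sqrt y ^ 2) / 2) = exp (- s)"
    by simp
  then have "sqrt y ^ (q - 1) * exp (- (c * sqrt y ^ 2) / 2) * (1 / (c * sqrt y))
      = sqrt y ^ (q - 1) * (1 / sqrt y) / c * exp (- s)"
    by (simp only: divide_inverse inverse_mult_distrib mult_1_left mult_ac)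
  also have "\<dots> = (2 / c) powr (real q / 2 - 1) / c * (s powr (real q / 2 - 1) / exp s)"
    unfolding power by (simp only: exp_minus divide_inverse mult_ac)
  finally show ?thesis
    unfolding scale y_def .
qed

lemma set_integral_substitution_sqrt:
  fixes f :: "real \<Rightarrow> real" and c :: real
  assumes c: "c > 0" and cont: "\<And>t. isCont f t" and nonneg: "\<And>t. t \<ge> 0 \<Longrightarrow> f t \<ge> 0"
    and integrable: "set_integrable lborel {0<..} (\<lambda>s. f (sqrt (2 * s / c)) * (1 / (c * sqrt (2 * s / c))))"
  shows "set_integrable lborel {0<..} f"
    and "(LBINT t:{0<..}. f t) = (LBINT s:{0<..}. f (sqrt (2 * s / c)) * (1 / (c * sqrt (2 * s / c))))"
proof -
  define g where "g s = sqrt (2 * s / c)" for s :: real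
  define g' where "g' s = 1 / (c * sqrt (2 * s / c))" for s :: real
  have deriv: "DERIV g s :> g' s" if "s > 0" for s
    unfolding g_def g'_def using that c
    by (auto intro!: derivative_eq_intros simp: field_simps real_sqrt_divide)
  have cont_g': "isCont g' s" if "s > 0" for s
  proof -
    have "2 * s / c > 0"
      using that c by simp
    then show ?thesis
      unfolding g'_def using c by (intro continuous_intros) auto
  qed
  have g_nonneg: "g s \<ge> 0" and g'_nonneg: "g' s \<ge> 0" if "s \<ge> 0" for s
    using that c by (simp_all add: g_def g'_def)
  have "isCont g 0"
    unfolding g_def using c by (intro continuous_intros) auto
  then have "(g \<longlongrightarrow> 0) (at_right 0)"
    by (simp add: isCont_def filterlim_at_split g_def)
  then have lim_0: "((ereal \<circ> g \<circ> real_of_ereal) \<longlongrightarrow> 0) (at_right 0)"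
    unfolding zero_ereal_def by (simp only: ereal_tendsto_simps1 ereal_tendsto_simps2)
  have "filterlim (\<lambda>s. (2 / c) * s) at_top at_top"
    using c by (intro filterlim_tendsto_pos_mult_at_top[OF tendsto_const _ filterlim_ident]) simp
  then have "filterlim g at_top at_top"
    unfolding g_def by (intro filterlim_compose[OF sqrt_at_top]) (simp add: field_simps)
  then have lim_infinity: "((ereal \<circ> g \<circ> real_of_ereal) \<longlongrightarrow> \<infinity>) (at_left \<infinity>)"
    by (simp only: ereal_tendsto_simps1 ereal_tendsto_simps2)
  have "set_integrable lborel (einterval 0 \<infinity>) (\<lambda>s. f (g s) * g' s)"
    using integrable by (simp add: g_def g'_def zero_ereal_def)
  note substitution = interval_integral_substitution_nonneg[OF _ _ _ _ _ _ lim_0 lim_infinity this]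
  have "set_integrable lborel (einterval 0 \<infinity>) f"
      "(LBINT x=0..\<infinity>. f x) = (LBINT x=0..\<infinity>. f (g x) * g' x)"
    by (rule substitution; use deriv cont_g' cont g_nonneg g'_nonneg nonneg in \<open>auto simp: zero_ereal_def\<close>)+
  then show "set_integrable lborel {0<..} f"
    and "(LBINT t:{0<..}. f t) = (LBINT s:{0<..}. f (sqrt (2 * s / c)) * (1 / (c * sqrt (2 * s / c))))"
    by (simp_all add: interval_lebesgue_integral_def zero_ereal_def g_def g'_def)
qed

lemma gaussian_moment_set_integral:
  fixes c :: real
  assumes c: "c > 0" and q: "q \<ge> 1"
  shows "set_integrable lborel {0<..} (\<lambda>t. t ^ (q - 1) * exp (- (c * t ^ 2) / 2))"
    and "(LBINT t:{0<..}. t ^ (q - 1) * exp (- (c * t ^ 2) / 2))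
      = (c / 2) powr (- real q / 2) * Gamma (real q / 2) / 2"
proof -
  define f where "f t = t ^ (q - 1) * exp (- (c * t ^ 2) / 2)" for t :: real
  define K where "K = (c / 2) powr (- real q / 2) / 2"
  define \<Gamma>f where "\<Gamma>f s = s powr (real q / 2 - 1) / exp s" for s :: real
  have "real q / 2 > 0"
    using q by simp
  note \<Gamma> = Gamma_real_set_integral[OF this, folded \<Gamma>f_def]
  have substituted: "f (sqrt (2 * s / c)) * (1 / (c * sqrt (2 * s / c))) = K * \<Gamma>f s" if "s > 0" for s
    unfolding f_def K_def \<Gamma>f_def using gaussian_substitution_integrand[OF c that q] by simp
  have "set_integrable lborel {0<..} (\<lambda>s. K * \<Gamma>f s)"
    using \<Gamma>(1) by (rule set_integrable_mult_right)
  then have integrable: "set_integrable lborel {0<..} (\<lambda>s. f (sqrt (2 * s / c)) * (1 / (c * sqrt (2 * s / c))))"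
    by (subst set_integrable_cong[OF refl refl substituted]) auto
  have cont: "isCont f t" for t
    unfolding f_def by (intro continuous_intros) simp
  have nonneg: "f t \<ge> 0" if "t \<ge> 0" for t
    using that by (simp add: f_def)
  note substitution = set_integral_substitution_sqrt[OF c cont nonneg integrable]
  show "set_integrable lborel {0<..} f"
    by (rule substitution(1))
  have "(LBINT t:{0<..}. f t) = (LBINT s:{0<..}. f (sqrt (2 * s / c)) * (1 / (c * sqrt (2 * s / c))))"
    by (rule substitution(2))
  also have "\<dots> = (LBINT s:{0<..}. K * \<Gamma>f s)"
    using substituted by (intro set_lebesgue_integral_cong) auto
  also have "\<dots> = K * Gamma (real q / 2)"
    using \<Gamma>(2) by simp
  finally show "(LBINT t:{0<..}. f t) = (c / 2) powr (- real q / 2) * Gamma (real q / 2) / 2"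
    by (simp add: K_def)
qed

lemma half_gaussian_set_integral:
  fixes c :: real
  assumes "c > 0"
  shows "set_integrable lborel {0<..} (\<lambda>t. exp (- (c * t ^ 2) / 2))"
    and "(LBINT t:{0<..}. exp (- (c * t ^ 2) / 2)) = sqrt (2 * pi / c) / 2"
proof -
  show "set_integrable lborel {0<..} (\<lambda>t. exp (- (c * t ^ 2) / 2))"
    using gaussian_moment_set_integral(1)[OF assms, of 1] by simp
  have "(c / 2) powr (- real 1 / 2) = inverse ((c / 2) powr (1 / 2))"
    by (simp add: powr_minus[symmetric])
  also have "(c / 2) powr (1 / 2) = sqrt (c / 2)"
    using assms by (simp add: powr_half_sqrt)
  finally have "(c / 2) powr (- real 1 / 2) = inverse (sqrt (c / 2))" .
  moreover have "inverse (sqrt (c / 2)) * sqrt pi = sqrt (2 * pi / c)"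
    using assms by (simp add: real_sqrt_divide real_sqrt_mult field_simps)
  ultimately show "(LBINT t:{0<..}. exp (- (c * t ^ 2) / 2)) = sqrt (2 * pi / c) / 2"
    using gaussian_moment_set_integral(2)[OF assms, of 1] by (simp add: Gamma_one_half_real)
qed

lemma set_integral_mono':
  fixes f g :: "real \<Rightarrow> real"
  assumes "set_integrable lborel A g" "\<And>t. t \<in> A \<Longrightarrow> f t \<le> g t" "\<And>t. t \<in> A \<Longrightarrow> 0 \<le> g t"
  shows "(LBINT t:A. f t) \<le> (LBINT t:A. g t)"
  unfolding set_lebesgue_integral_def
  using assms by (intro integral_mono') (auto simp: set_integrable_def indicator_def)

lemma set_integral_Ioi_split:
  fixes h :: "real \<Rightarrow> real"
  assumes "set_integrable lborel {0<..} h" "a > 0"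
  shows "(LBINT t:{0<..}. h t) = (LBINT t:{0<..<a}. h t) + (LBINT t:{a..}. h t)"
    and "set_integrable lborel {a..} h"
proof -
  show tail: "set_integrable lborel {a..} h"
    by (rule set_integrable_subset[OF assms(1)]) (use assms in auto)
  have initial: "set_integrable lborel {0<..<a} h"
    by (rule set_integrable_subset[OF assms(1)]) auto
  show "(LBINT t:{0<..}. h t) = (LBINT t:{0<..<a}. h t) + (LBINT t:{a..}. h t)"
    unfolding ivl_disj_un_one(6)[OF assms(2), symmetric]
    by (rule set_integral_Un[OF _ initial tail]) auto
qed

lemma exp_neg_square_le_split:
  fixes a c t :: real
  assumes "0 \<le> a" "a \<le> t" "c \<le> 1"
  shows "exp (- (t ^ 2) / 2) \<le> exp (- (a ^ 2) / 2 * (1 - c)) * exp (- (c * t ^ 2) / 2)"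
proof -
  have "(1 - c) * a ^ 2 \<le> (1 - c) * t ^ 2"
    using assms by (intro mult_left_mono power_mono) auto
  then show ?thesis
    by (simp add: field_simps flip: exp_add)
qed

lemma gaussian_tail_moment_le:
  fixes a c :: real
  assumes a: "a > 0" and c: "0 < c" "c \<le> 1" and q: "q \<ge> 1"
  shows "2 * (LBINT t:{a..}. t ^ (q - 1) * exp (- (t ^ 2) / 2))
     \<le> exp (- (a ^ 2) / 2 * (1 - c)) * ((c / 2) powr (- real q / 2) * Gamma (real q / 2))"
proof -
  define E where "E = exp (- (a ^ 2) / 2 * (1 - c))"
  define h where "h t = t ^ (q - 1) * exp (- (c * t ^ 2) / 2)" for t :: real
  note moment = gaussian_moment_set_integral[OF c(1) q, folded h_def]
  note split = set_integral_Ioi_split[OF moment(1) a]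
  have "(LBINT t:{a..}. t ^ (q - 1) * exp (- (t ^ 2) / 2)) \<le> (LBINT t:{a..}. E * h t)"
  proof (rule set_integral_mono')
    show "set_integrable lborel {a..} (\<lambda>t. E * h t)"
      using split(2) by simp
    fix t
    assume "t \<in> {a..}"
    then show "t ^ (q - 1) * exp (- (t ^ 2) / 2) \<le> E * h t" "0 \<le> E * h t"
      using exp_neg_square_le_split[of a t c] a c
      by (auto simp: E_def h_def mult.left_commute intro!: mult_left_mono)
  qed
  also have "\<dots> \<le> E * (LBINT t:{0<..}. h t)"
  proof -
    have "0 \<le> (LBINT t:{0<..<a}. h t)"
      unfolding set_lebesgue_integral_def by (intro integral_nonneg_AE AE_I2) (simp add: h_def indicator_def)
    then show ?thesis
      using split(1) by (simp add: E_def)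
  qed
  finally show ?thesis
    unfolding moment(2) E_def by simp
qed

lemma gaussian_tail_less:
  fixes a c :: real
  assumes "a > 0" "c > 0"
  shows "(LBINT t:{a..}. exp (- (c * t ^ 2) / 2)) < sqrt (2 * pi / c) / 2"
    and "set_integrable lborel {a..} (\<lambda>t. exp (- (c * t ^ 2) / 2))"
proof -
  note half = half_gaussian_set_integral[OF assms(2)]
  note split = set_integral_Ioi_split[OF half(1) assms(1)]
  show "set_integrable lborel {a..} (\<lambda>t. exp (- (c * t ^ 2) / 2))"
    by (fact split(2))
  have "set_integrable lborel {0<..<a} (\<lambda>_. exp (- (c * a ^ 2) / 2))"
    by (rule set_integrable_subset[OF borel_integrable_atLeastAtMost'[OF continuous_on_const, of 0 a]]) auto
  moreover have "set_integrable lborel {0<..<a} (\<lambda>t. exp (- (c * t ^ 2) / 2))"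
    by (rule set_integrable_subset[OF half(1)]) auto
  ultimately have "(LBINT t:{0<..<a}. exp (- (c * a ^ 2) / 2)) \<le> (LBINT t:{0<..<a}. exp (- (c * t ^ 2) / 2))"
    using assms by (intro set_integral_mono) (auto intro!: mult_left_mono power_mono)
  moreover have "(LBINT t:{0<..<a}. exp (- (c * a ^ 2) / 2)) = a * exp (- (c * a ^ 2) / 2)"
    using assms by (subst set_integral_const) auto
  moreover have "a * exp (- (c * a ^ 2) / 2) > 0"
    using assms by simp
  ultimately show "(LBINT t:{a..}. exp (- (c * t ^ 2) / 2)) < sqrt (2 * pi / c) / 2"
    using split(1) half(2) by linarith
qed

lemma gaussian_tail_inverse_less:
  fixes a c :: real
  assumes a: "a > 0" and c: "0 < c" "c \<le> 1"
  shows "2 * (LBINT t:{a..}. inverse t * exp (- (t ^ 2) / 2))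
     < exp (- (a ^ 2) / 2 * (1 - c)) * (1 / a * sqrt (2 * pi / c))"
proof -
  define E where "E = exp (- (a ^ 2) / 2 * (1 - c))"
  define h where "h t = exp (- (c * t ^ 2) / 2)" for t :: real
  note tail = gaussian_tail_less[OF a c(1), folded h_def]
  have "E / a > 0"
    using a by (simp add: E_def)
  have "(LBINT t:{a..}. inverse t * exp (- (t ^ 2) / 2)) \<le> (LBINT t:{a..}. E / a * h t)"
  proof (rule set_integral_mono')
    show "set_integrable lborel {a..} (\<lambda>t. E / a * h t)"
      using tail(2) by simp
    fix t
    assume t: "t \<in> {a..}"
    have "inverse t * exp (- (t ^ 2) / 2) \<le> (1 / a) * (E * h t)"
      using exp_neg_square_le_split[of a t c] t a c
      by (intro mult_mono) (auto simp: E_def h_def field_simps)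
    then show "inverse t * exp (- (t ^ 2) / 2) \<le> E / a * h t"
      by simp
    show "0 \<le> E / a * h t"
      using \<open>E / a > 0\<close> by (intro mult_nonneg_nonneg) (auto simp: h_def)
  qed
  also have "\<dots> = E / a * (LBINT t:{a..}. h t)"
    by simp
  also have "\<dots> < E / a * (sqrt (2 * pi / c) / 2)"
    using tail(1) \<open>E / a > 0\<close> by (rule mult_strict_left_mono)
  finally show ?thesis
    unfolding E_def by simp
qed

lemma gaussian_tail_first_moment:
  fixes a :: real
  assumes "a \<ge> 0"
  shows "set_integrable lborel {a..} (\<lambda>t. t * exp (- (t ^ 2) / 2))"
    and "(LBINT t:{a..}. t * exp (- (t ^ 2) / 2)) = exp (- (a ^ 2) / 2)"
proof -
  define k where "k = (\<lambda>t::real. t * exp (- (t ^ 2) / 2))"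
  define F where "F t = - exp (- (t ^ 2) / 2)" for t :: real
  have "isCont F a"
    unfolding F_def by (intro continuous_intros) simp
  then have "((F \<circ> real_of_ereal) \<longlongrightarrow> F a) (at_right (ereal a))"
    by (simp add: isCont_def filterlim_at_split ereal_tendsto_simps1)
  moreover have "(F \<longlongrightarrow> 0) at_top"
    unfolding F_def by real_asymp
  then have "((F \<circ> real_of_ereal) \<longlongrightarrow> 0) (at_left \<infinity>)"
    by (simp only: ereal_tendsto_simps1)
  moreover have "AE x in lborel. ereal a < ereal x \<longrightarrow> ereal x < \<infinity> \<longrightarrow> 0 \<le> k x"
    using assms by (auto simp: k_def)
  moreover have "DERIV F x :> k x" for x
    unfolding F_def k_def by (auto intro!: derivative_eq_intros simp: power2_eq_square)
  moreover have "isCont k x" for x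
    unfolding k_def by (intro continuous_intros) simp
  ultimately have FTC: "set_integrable lborel (einterval a \<infinity>) k" "(LBINT t=a..\<infinity>. k t) = 0 - F a"
    by (intro interval_integral_FTC_nonneg; simp)+
  have Ioi: "set_integrable lborel {a<..} k" "(LBINT t:{a<..}. k t) = - F a"
    using FTC by (simp_all add: interval_lebesgue_integral_def)
  have "set_integrable lborel ({a<..} \<union> {a}) k"
    by (rule set_integrable_Un[OF Ioi(1)]) auto
  moreover have "{a<..} \<union> {a} = {a..}"
    by auto
  ultimately show "set_integrable lborel {a..} (\<lambda>t. t * exp (- (t ^ 2) / 2))"
    by (simp add: k_def)
  have "(LBINT t:{a..}. k t) = (LBINT t:{a<..}. k t)"
  proof (rule set_integral_cong_set)
    show "AE t in lborel. (t \<in> {a<..}) = (t \<in> {a..})"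
      using AE_lborel_singleton[of a] by eventually_elim auto
  qed (unfold set_borel_measurable_def k_def; measurable)+
  then show "(LBINT t:{a..}. t * exp (- (t ^ 2) / 2)) = exp (- (a ^ 2) / 2)"
    using Ioi(2) by (simp add: k_def F_def)
qed

lemma gaussian_tail_inverse_less_of_sqrt2_le:
  fixes a c :: real
  assumes a: "sqrt 2 \<le> a" and c: "0 < c"
  shows "2 * (LBINT t:{a..}. inverse t * exp (- (t ^ 2) / 2)) < exp (- (a ^ 2) / 2 * (1 - c))"
proof -
  have "a > 0"
    using a real_sqrt_gt_zero[of 2] by linarith
  have "sqrt 2 ^ 2 \<le> a ^ 2"
    using a by (intro power_mono) auto
  then have "2 \<le> a ^ 2"
    by simp
  note first_moment = gaussian_tail_first_moment[of a]
  have "(LBINT t:{a..}. inverse t * exp (- (t ^ 2) / 2)) \<le> (LBINT t:{a..}. 1 / a ^ 2 * (t * exp (- (t ^ 2) / 2)))"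
  proof (rule set_integral_mono')
    show "set_integrable lborel {a..} (\<lambda>t. 1 / a ^ 2 * (t * exp (- (t ^ 2) / 2)))"
      using first_moment(1) \<open>a > 0\<close> by simp
    fix t
    assume t: "t \<in> {a..}"
    then have "a ^ 2 \<le> t ^ 2"
      using \<open>a > 0\<close> by (intro power_mono) auto
    then have "inverse t \<le> 1 / a ^ 2 * t"
      using t \<open>a > 0\<close> by (simp add: field_simps power2_eq_square)
    then show "inverse t * exp (- (t ^ 2) / 2) \<le> 1 / a ^ 2 * (t * exp (- (t ^ 2) / 2))"
      using mult_right_mono[of "inverse t" "1 / a ^ 2 * t" "exp (- (t ^ 2) / 2)"] by (simp add: mult.assoc)
    show "0 \<le> 1 / a ^ 2 * (t * exp (- (t ^ 2) / 2))"
      using t \<open>a > 0\<close> by simp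
  qed
  also have "\<dots> = 1 / a ^ 2 * exp (- (a ^ 2) / 2)"
    using first_moment(2) \<open>a > 0\<close> by simp
  also have "\<dots> \<le> 1 / 2 * exp (- (a ^ 2) / 2)"
    using \<open>2 \<le> a ^ 2\<close> by (intro mult_right_mono divide_left_mono) auto
  also have "\<dots> < 1 / 2 * exp (- (a ^ 2) / 2 * (1 - c))"
    using \<open>a > 0\<close> c by (simp add: algebra_simps)
  finally show ?thesis
    by simp
qed

lemma gamma_kj_nonneg:
  assumes "p1 + p2 \<ge> 2" "n \<ge> n1" "n1 > p1 + p2"
  shows "gamma_kj p1 p2 n n1 k j \<ge> 0"
proof -
  have kappa_nonneg: "kappa p1 p2 n n1 r \<ge> 0" if "r \<ge> 2" for r
    using kappa_pos[OF assms that] by simp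
  show ?thesis
    unfolding gamma_kj_def kappa_tilde_def
    by (intro sum_nonneg prod_nonneg divide_nonneg_nonneg) (simp_all add: kappa_nonneg)
qed

lemma m_param_pos:
  assumes "p1 + p2 \<ge> 2" "n \<ge> n1" "n1 > p1 + p2"
  shows "m_param p1 p2 n n1 > 0"
proof -
  have "real n1 - real (p1 + p2) - 1/2 > 0"
    using assms(3) by linarith
  then show ?thesis
    unfolding m_param_def using kappa_pos[OF assms, of 2] by simp
qed

lemma I2_le:
  assumes "p1 + p2 \<ge> 2" "n \<ge> n1" "n1 > p1 + p2" "v > 0" "0 < c" "c \<le> 1"
  defines "a \<equiv> m_param p1 p2 n n1 * v"
  shows "I2 p1 p2 n n1 s v \<le> 2 * (LBINT t:{a..}. inverse t * exp (- (t ^ 2) / 2))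
    + exp (- (a ^ 2) / 2 * (1 - c)) * U2_sum p1 p2 n n1 s c"
proof -
  have "a > 0"
    using m_param_pos[OF assms(1-3)] \<open>v > 0\<close> by (simp add: a_def)
  have "2 * (\<Sum>k=1..s. 1 / fact k * (\<Sum>j=0..s-k. gamma_kj p1 p2 n n1 k j *
      (LBINT t:{a..}. t ^ (3*k + j - 1) * exp (- (t^2) / 2))))
    = (\<Sum>k=1..s. 1 / fact k * (\<Sum>j=0..s-k. gamma_kj p1 p2 n n1 k j *
      (2 * (LBINT t:{a..}. t ^ (3*k + j - 1) * exp (- (t^2) / 2)))))"
    by (simp add: sum_distrib_left mult_ac)
  also have "\<dots> \<le> (\<Sum>k=1..s. 1 / fact k * (\<Sum>j=0..s-k. gamma_kj p1 p2 n n1 k j *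
      (exp (- (a ^ 2) / 2 * (1 - c)) * ((c / 2) powr (- real (3*k + j) / 2) * Gamma (real (3*k + j) / 2)))))"
  proof (intro sum_mono mult_left_mono)
    fix k j
    assume "k \<in> {1..s}"
    then show "2 * (LBINT t:{a..}. t ^ (3*k + j - 1) * exp (- (t^2) / 2))
      \<le> exp (- (a ^ 2) / 2 * (1 - c)) * ((c / 2) powr (- real (3*k + j) / 2) * Gamma (real (3*k + j) / 2))"
      by (intro gaussian_tail_moment_le[OF \<open>a > 0\<close> \<open>0 < c\<close> \<open>c \<le> 1\<close>]) auto
  qed (use gamma_kj_nonneg[OF assms(1-3)] in auto)
  also have "\<dots> = exp (- (a ^ 2) / 2 * (1 - c)) * U2_sum p1 p2 n n1 s c"
    by (simp add: U2_sum_def sum_distrib_left mult_ac)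
  finally show ?thesis
    unfolding I2_def Let_def a_def[symmetric] by simp
qed

theorem mainTheorem2:
  fixes p1 p2 n n1 s :: nat and v c :: real
  assumes "p1 \<ge> 1" and "p1 + p2 \<ge> 2" and "n \<ge> n1" and "n1 > p1 + p2" and "s \<ge> 1"
    and "0 < v" and "v < 1" and "0 < c" and "c < 1"
  shows "I2 p1 p2 n n1 s v < U2 p1 p2 n n1 s v c \<and>
    ((m_param p1 p2 n n1 * v \<ge> sqrt 2 \<or> m_param p1 p2 n n1 * v > sqrt (2 * pi / c))
       \<longrightarrow> I2 p1 p2 n n1 s v < U2_tilde p1 p2 n n1 s v c)"
proof -
  define a where "a = m_param p1 p2 n n1 * v"
  define E where "E = exp (- (a ^ 2) / 2 * (1 - c))"
  define J0 where "J0 = (LBINT t:{a..}. inverse t * exp (- (t ^ 2) / 2))"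
  have "a > 0"
    using m_param_pos[OF assms(2-4)] \<open>0 < v\<close> by (simp add: a_def)
  have I2: "I2 p1 p2 n n1 s v \<le> 2 * J0 + E * U2_sum p1 p2 n n1 s c"
    using I2_le[OF assms(2-4,6,8)] \<open>c < 1\<close> by (simp add: a_def E_def J0_def)
  have J0: "2 * J0 < E * (1 / a * sqrt (2 * pi / c))"
    using gaussian_tail_inverse_less[OF \<open>a > 0\<close> \<open>0 < c\<close>] \<open>c < 1\<close> by (simp add: J0_def E_def)
  have "2 * J0 < E" if "a \<ge> sqrt 2 \<or> a > sqrt (2 * pi / c)"
  proof (cases "a \<ge> sqrt 2")
    case True
    then show ?thesis
      using gaussian_tail_inverse_less_of_sqrt2_le[OF _ \<open>0 < c\<close>] by (simp add: J0_def E_def)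
  next
    case False
    then have "1 / a * sqrt (2 * pi / c) < 1"
      using that \<open>a > 0\<close> by (simp add: field_simps)
    then have "E * (1 / a * sqrt (2 * pi / c)) < E * 1"
      by (intro mult_strict_left_mono) (simp_all add: E_def)
    then show ?thesis
      using J0 by simp
  qed
  moreover have "U2 p1 p2 n n1 s v c = E * (1 / a * sqrt (2 * pi / c)) + E * U2_sum p1 p2 n n1 s c"
    "U2_tilde p1 p2 n n1 s v c = E + E * U2_sum p1 p2 n n1 s c"
    unfolding U2_def U2_tilde_def Let_def a_def[symmetric] E_def[symmetric] by (simp_all add: distrib_left)
  ultimately show ?thesis
    using I2 J0 unfolding a_def by auto
qed

end
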